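(* Let $h<0$ and $c_0=\min\{-1+\frac{h^2}{2},\,1\}$. For $c\in(-1,c_0)$ define $$T_\xi(c)=4\int_0^{\xi_1}\frac{d\xi}{\sqrt{\xi^4+2h\xi^2+2(c+1)}},\quad \xi_1^2=-h-\sqrt{h^2-2(c+1)},$$ $$T_\eta(c)=4\int_0^{\eta_1}\frac{d\eta}{\sqrt{-\eta^4+2h\eta^2-2(c-1)}},\quad \eta_1^2=h+\sqrt{h^2-2(c-1)}.$$ Then $$\lim_{c\to-1}\frac{T_\xi}{T_\eta}=\Big(1+\frac4{h^2}\Big)^{1/4}\frac{K(0)}{K\big(\frac{h+\sqrt{h^2+4}}{2\sqrt{h^2+4}}\big)}>1,$$ and $$\lim_{c\to c_0}\frac{T_\xi}{T_\eta}=\begin{cases}+\infty,& h\in[-2,0),\\[2pt] \Big(\frac{2h}{h-\sqrt{h^2-4}}\Big)^{1/2}\dfrac{K\Big(\frac{4}{(-h+\sqrt{h^2-4})^2}\Big)}{K(0)}, & h<-2.\end{cases}$$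
   Context: $K(m)=\int_0^1\frac{dt}{\sqrt{(1-t^2)(1-mt^2)}}$ is the complete elliptic integral of the first kind. $T_\xi,T_\eta$ are the periods, in regularized time, of the parabolic coordinates $\xi^2=r+x$, $\eta^2=r-x$ of solutions of the planar Stark problem $\ddot x=-x/r^3+1$, $\ddot y=-y/r^3$ with energy $h$ and constant $c$ (these lie on invariant tori for $c\in(-1,c_0)$). *)

theory Defs
  imports "HOL-Analysis.Analysis"
begin

text \<open>Complete elliptic integral of the first kind (improper at t = 1; taken as a
  Henstock--Kurzweil integral, which agrees with the absolutely convergent
  improper integral since the integrand is nonnegative).\<close>
definition ellK :: "real \<Rightarrow> real" where
  "ellK m = integral {0..1} (\<lambda>t. 1 / sqrt ((1 - t\<^sup>2) * (1 - m * t\<^sup>2)))"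

definition c0 :: "real \<Rightarrow> real" where
  "c0 h = min (-1 + h\<^sup>2 / 2) 1"

definition xi1 :: "real \<Rightarrow> real \<Rightarrow> real" where
  "xi1 h c = sqrt (- h - sqrt (h\<^sup>2 - 2 * (c + 1)))"

definition eta1 :: "real \<Rightarrow> real \<Rightarrow> real" where
  "eta1 h c = sqrt (h + sqrt (h\<^sup>2 - 2 * (c - 1)))"

definition Txi :: "real \<Rightarrow> real \<Rightarrow> real" where
  "Txi h c = 4 * integral {0..xi1 h c} (\<lambda>x. 1 / sqrt (x ^ 4 + 2 * h * x\<^sup>2 + 2 * (c + 1)))"

definition Teta :: "real \<Rightarrow> real \<Rightarrow> real" where
  "Teta h c = 4 * integral {0..eta1 h c} (\<lambda>y. 1 / sqrt (- (y ^ 4) + 2 * h * y\<^sup>2 - 2 * (c - 1)))"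

end

theory Submission
  imports Defs "HOL-Real_Asymp.Real_Asymp"
begin

text \<open>With \<open>\<rho> = sqrt (h\<^sup>2 - 2 (c \<plusminus> 1))\<close> the quartic under the root factors as
  \<open>(x\<^sup>2 + h)\<^sup>2 - \<rho>\<^sup>2\<close> for \<open>T\<^sub>\<xi>\<close> and as \<open>\<rho>\<^sup>2 - (y\<^sup>2 - h)\<^sup>2\<close> for \<open>T\<^sub>\<eta>\<close>, and the
  substitution \<open>x = x\<^sub>1 sin t\<close> turns both periods into
  \<open>4 \<integral>\<^sub>0\<^sup>\<pi>\<^sup>/\<^sup>2 dt / sqrt (\<rho> - h + (\<rho> + h) sin\<^sup>2 t)\<close>, a continuous function of \<open>\<rho> > 0\<close>.
  At \<open>c = -1\<close>, and at \<open>c = c\<^sub>0 = 1\<close> when \<open>h < -2\<close>, both roots stay positive, so the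
  limits are ratios of such integrals, which rescaling and the symmetry \<open>t \<mapsto> \<pi>/2 - t\<close>
  turn into values of \<open>K\<close>. The strict inequality holds because for \<open>\<rho> > -h\<close> the
  integrand is at most \<open>1 / sqrt (\<rho> - h) < 1 / sqrt (-2h)\<close>, the constant integrand at \<open>\<rho> = -h\<close>. For \<open>-2 \<le> h < 0\<close> the root belonging to \<open>T\<^sub>\<xi>\<close> tends to
  \<open>0\<close> at \<open>c\<^sub>0\<close>, where the integral diverges logarithmically, while \<open>T\<^sub>\<eta>\<close> stays finite.\<close>

definition ellJ :: "real \<Rightarrow> real \<Rightarrow> real" where
  "ellJ A B = integral {0..pi/2} (\<lambda>t. 1 / sqrt (A + B * (sin t)\<^sup>2))"

lemma ellJ_integrand_pos:
  fixes A B t :: real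
  assumes "0 < A" "0 < A + B"
  shows "0 < A + B * (sin t)\<^sup>2"
proof (cases "0 \<le> B")
  case True
  then show ?thesis using assms by (simp add: add_pos_nonneg)
next
  case False
  have "(sin t)\<^sup>2 \<le> 1" by (simp add: abs_square_le_1)
  then have "B \<le> B * (sin t)\<^sup>2"
    using False mult_left_mono_neg[of "(sin t)\<^sup>2" 1 B] by simp
  then show ?thesis using assms by linarith
qed

lemma continuous_on_ellJ_integrand:
  assumes "0 < A" "0 < A + B"
  shows "continuous_on S (\<lambda>t. 1 / sqrt (A + B * (sin t)\<^sup>2))"
proof -
  have "A + B * (sin t)\<^sup>2 \<noteq> 0" for t
    using ellJ_integrand_pos[OF assms, of t] by simp
  then show ?thesis by (intro continuous_intros) auto
qed

lemma ellJ_integrable: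
  assumes "0 < A" "0 < A + B"
  shows "(\<lambda>t. 1 / sqrt (A + B * (sin t)\<^sup>2)) integrable_on {0..pi/2}"
  by (intro integrable_continuous_real continuous_on_ellJ_integrand assms)

lemma tendsto_ellJ:
  assumes A: "(A \<longlongrightarrow> a) F" and B: "(B \<longlongrightarrow> b) F" and ab: "0 < a" "0 < a + b"
  shows "((\<lambda>x. ellJ (A x) (B x)) \<longlongrightarrow> ellJ a b) F"
proof -
  define U where "U = {p :: real \<times> real. 0 < fst p \<and> 0 < fst p + snd p}"
  have "continuous_on (U \<times> cbox 0 (pi/2)) (\<lambda>(p, t). 1 / sqrt (fst p + snd p * (sin t)\<^sup>2))"
  proof -
    have "fst p + snd p * (sin t)\<^sup>2 \<noteq> 0" if "p \<in> U" for p t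
      using ellJ_integrand_pos[of "fst p" "snd p" t] that by (simp add: U_def)
    then show ?thesis
      unfolding case_prod_beta by (intro continuous_intros) (auto simp: mem_Times_iff)
  qed
  then have cont: "continuous_on U (\<lambda>p. ellJ (fst p) (snd p))"
    unfolding ellJ_def using integral_continuous_on_param by fastforce
  have "\<forall>\<^sub>F x in F. (A x, B x) \<in> U"
    using order_tendstoD(1)[OF A ab(1)] order_tendstoD(1)[OF tendsto_add[OF A B] ab(2)]
    by eventually_elim (simp add: U_def)
  from continuous_on_tendsto_compose[OF cont tendsto_Pair[OF A B] _ this] ab
  show ?thesis by (simp add: U_def)
qed

lemma integral_sqrt_product_eq_ellJ:
  fixes P Q R :: real
  assumes P: "0 < P" and Q: "0 < Q" and QRP: "0 < Q + R * P"
  shows "integral {0..sqrt P} (\<lambda>x. 1 / sqrt ((P - x\<^sup>2) * (Q + R * x\<^sup>2))) = ellJ Q (R * P)"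
proof -
  define g where "g t = 1 / sqrt (Q + R * P * (sin t)\<^sup>2)" for t
  have g_cont: "continuous_on S g" for S
    unfolding g_def using continuous_on_ellJ_integrand[of Q "R * P"] Q QRP by (simp add: mult.assoc)
  define F where "F x = integral {0..arcsin (x / sqrt P)} g" for x
  have sP: "0 < sqrt P" using P by simp
  have "((\<lambda>x. 1 / sqrt ((P - x\<^sup>2) * (Q + R * x\<^sup>2))) has_integral (F (sqrt P) - F 0)) {0..sqrt P}"
  proof (rule fundamental_theorem_of_calculus_interior)
    show "0 \<le> sqrt P" using sP by simp
    have "continuous_on {0..pi/2} (\<lambda>u. integral {0..u} g)"
      by (intro indefinite_integral_continuous_1 integrable_continuous_real g_cont)
    moreover have "continuous_on {0..sqrt P} (\<lambda>x. arcsin (x / sqrt P))"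
      using sP by (intro continuous_intros) (auto simp: field_simps)
    moreover have "(\<lambda>x. arcsin (x / sqrt P)) ` {0..sqrt P} \<subseteq> {0..pi/2}"
    proof -
      have "arcsin (x / sqrt P) \<in> {0..pi/2}" if "0 \<le> x" "x \<le> sqrt P" for x
        using that sP arcsin_nonneg[of "x / sqrt P"] arcsin_ubound[of "x / sqrt P"]
        by (simp add: divide_le_eq_1 order_trans[of "-1" 0])
      then show ?thesis by auto
    qed
    ultimately show "continuous_on {0..sqrt P} F"
      unfolding F_def by (rule continuous_on_compose2)
  next
    fix x assume x: "x \<in> {0<..<sqrt P}"
    define y where "y = x / sqrt P"
    have y: "0 < y" "y < 1" using x sP by (auto simp: y_def field_simps)
    have "0 < arcsin y" "arcsin y < pi/2"
      using y arcsin_less_arcsin[of 0 y] arcsin_less_arcsin[of y 1] by auto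
    then have "((\<lambda>u. integral {0..u} g) has_real_derivative g (arcsin y)) (at (arcsin y))"
      using integral_has_real_derivative[of 0 "pi/2" g "arcsin y"] g_cont
      by (simp add: at_within_Icc_at)
    moreover have "((\<lambda>x. arcsin (x / sqrt P)) has_real_derivative
                     inverse (sqrt (1 - y\<^sup>2)) * (1 / sqrt P)) (at x)"
      unfolding y_def using y[unfolded y_def] sP
      by (intro DERIV_chain2[OF DERIV_arcsin]) (auto intro!: derivative_eq_intros simp: field_simps)
    ultimately have "(F has_real_derivative g (arcsin y) * (inverse (sqrt (1 - y\<^sup>2)) * (1 / sqrt P))) (at x)"
      unfolding F_def y_def by (rule DERIV_chain2)
    moreover have "g (arcsin y) * (inverse (sqrt (1 - y\<^sup>2)) * (1 / sqrt P))
                   = 1 / sqrt ((P - x\<^sup>2) * (Q + R * x\<^sup>2))"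
    proof -
      have "Q + R * P * (sin (arcsin y))\<^sup>2 = Q + R * x\<^sup>2"
        using y P by (simp add: sin_arcsin y_def power_divide)
      then have "g (arcsin y) * (inverse (sqrt (1 - y\<^sup>2)) * (1 / sqrt P))
                 = 1 / (sqrt (Q + R * x\<^sup>2) * (sqrt (1 - y\<^sup>2) * sqrt P))"
        unfolding g_def by (simp add: field_simps)
      also have "sqrt (1 - y\<^sup>2) * sqrt P = sqrt (P - x\<^sup>2)"
        using P by (simp add: y_def power_divide real_sqrt_mult[symmetric] field_simps)
      finally show ?thesis by (simp add: real_sqrt_mult mult.commute)
    qed
    ultimately show "(F has_vector_derivative 1 / sqrt ((P - x\<^sup>2) * (Q + R * x\<^sup>2))) (at x)"
      by (simp add: has_real_derivative_iff_has_vector_derivative)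
  qed
  moreover have "F (sqrt P) - F 0 = ellJ Q (R * P)"
    using sP by (simp add: F_def ellJ_def g_def[abs_def] mult.assoc)
  ultimately show ?thesis by (simp add: integral_unique)
qed

lemma ellK_eq_ellJ:
  assumes "m < 1"
  shows "ellK m = ellJ 1 (- m)"
  using integral_sqrt_product_eq_ellJ[of 1 1 "- m"] assms by (simp add: ellK_def)

lemma ellJ_eq_ellK:
  assumes A: "0 < A" and AB: "0 < A + B"
  shows "ellJ A B = ellK (- B / A) / sqrt A"
proof -
  have "1 / sqrt (A + B * (sin t)\<^sup>2) = 1 / sqrt A * (1 / sqrt (1 + B / A * (sin t)\<^sup>2))" for t
  proof -
    have "A + B * (sin t)\<^sup>2 = A * (1 + B / A * (sin t)\<^sup>2)" using A by (simp add: field_simps)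
    then show ?thesis by (simp add: real_sqrt_mult)
  qed
  then have "ellJ A B = integral {0..pi/2} (\<lambda>t. 1 / sqrt A * (1 / sqrt (1 + B / A * (sin t)\<^sup>2)))"
    unfolding ellJ_def by (simp only:)
  also have "\<dots> = ellJ 1 (B / A) / sqrt A"
    unfolding ellJ_def integral_mult_right by simp
  also have "ellJ 1 (B / A) = ellK (- B / A)"
    using A AB by (simp add: ellK_eq_ellJ field_simps)
  finally show ?thesis .
qed

lemma integral_reflect_Icc:
  fixes f :: "real \<Rightarrow> 'a::euclidean_space"
  shows "integral {a..b} (\<lambda>t. f (a + b - t)) = integral {a..b} f"
proof -
  have "integral {a..b} (\<lambda>t. f (a + b - t)) = integral {-(-a)..-(-b)} (\<lambda>t. (f \<circ> (+) (a + b)) (- t))"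
    by (simp add: o_def)
  also have "\<dots> = integral {-b..-a} (f \<circ> (+) (a + b))"
    by (rule Henstock_Kurzweil_Integration.integral_reflect_real)
  also have "\<dots> = integral {-b + (a + b)..-a + (a + b)} f"
    by (rule integral_shift_Icc_real)
  finally show ?thesis by simp
qed

lemma ellJ_reflect: "ellJ A B = ellJ (A + B) (- B)"
proof -
  have eq: "A + B + - B * (sin t)\<^sup>2 = A + B * (sin (0 + pi/2 - t))\<^sup>2" for t
    by (simp add: sin_diff cos_squared_eq algebra_simps)
  have "ellJ A B = integral {0..pi/2} (\<lambda>t. 1 / sqrt (A + B * (sin (0 + pi/2 - t))\<^sup>2))"
    unfolding ellJ_def using integral_reflect_Icc[of 0 "pi/2" "\<lambda>t. 1 / sqrt (A + B * (sin t)\<^sup>2)"]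
    by simp
  also have "\<dots> = ellJ (A + B) (- B)"
    unfolding ellJ_def by (simp only: eq)
  finally show ?thesis .
qed

lemma ellJ_zero: "ellJ A 0 = pi/2 / sqrt A"
  by (simp add: ellJ_def)

lemma ellJ_pos:
  assumes "0 < A" "0 < A + B"
  shows "0 < ellJ A B"
proof -
  have "0 < integral {0..pi/2} (\<lambda>t. 1 / sqrt (A + \<bar>B\<bar>))"
    using assms by simp
  also have "\<dots> \<le> ellJ A B"
    unfolding ellJ_def
  proof (rule integral_le)
    fix t
    have "B * (sin t)\<^sup>2 \<le> \<bar>B\<bar> * (sin t)\<^sup>2"
      by (simp add: mult_right_mono)
    also have "\<dots> \<le> \<bar>B\<bar>"
      by (simp add: mult_left_le abs_square_le_1)
    finally show "1 / sqrt (A + \<bar>B\<bar>) \<le> 1 / sqrt (A + B * (sin t)\<^sup>2)"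
      using ellJ_integrand_pos[OF assms, of t] by (intro divide_left_mono) auto
  qed (use assms ellJ_integrable in auto)
  finally show ?thesis .
qed

lemma ellJ_le_ellJ_zero:
  assumes "0 < A" "0 \<le> B"
  shows "ellJ A B \<le> ellJ A 0"
  unfolding ellJ_def
proof (rule integral_le)
  fix t
  show "1 / sqrt (A + B * (sin t)\<^sup>2) \<le> 1 / sqrt (A + 0 * (sin t)\<^sup>2)"
    using assms ellJ_integrand_pos[of A B t] by (intro divide_left_mono) auto
qed (use assms ellJ_integrable[of A B] ellJ_integrable[of A 0] in auto)

lemma has_integral_inverse_affine:
  fixes s q L :: real
  assumes "0 < s" "0 < q" "0 \<le> L"
  shows "((\<lambda>t. 1 / (s + q * (L - t))) has_integral ln (1 + q * L / s) / q) {0..L}"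
proof -
  have pos: "0 < s + q * (L - t)" if "t \<le> L" for t
    using assms that by (intro add_pos_nonneg) auto
  have "((\<lambda>t. 1 / (s + q * (L - t))) has_integral
          (- ln (s + q * (L - L)) / q) - (- ln (s + q * (L - 0)) / q)) {0..L}"
  proof (rule fundamental_theorem_of_calculus)
    fix t assume "t \<in> {0..L}"
    then have "((\<lambda>t. - ln (s + q * (L - t)) / q) has_real_derivative
                 - ((1 / (s + q * (L - t))) * (- q)) / q) (at t)"
      using pos[of t] by (auto intro!: derivative_eq_intros)
    then have "((\<lambda>t. - ln (s + q * (L - t)) / q) has_real_derivative 1 / (s + q * (L - t))) (at t)"
      using assms by simp
    then show "((\<lambda>t. - ln (s + q * (L - t)) / q) has_vector_derivative 1 / (s + q * (L - t)))
                 (at t within {0..L})"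
      by (simp add: has_real_derivative_iff_has_vector_derivative has_vector_derivative_at_within)
  qed (use assms in simp)
  moreover have "(- ln (s + q * (L - L)) / q) - (- ln (s + q * (L - 0)) / q) = ln (1 + q * L / s) / q"
  proof -
    have "1 + q * L / s = (s + q * L) / s" using assms by (simp add: field_simps)
    then have "ln (1 + q * L / s) = ln (s + q * L) - ln s" using assms pos[of 0] by (simp add: ln_div)
    then show ?thesis by (simp add: diff_divide_distrib)
  qed
  ultimately show ?thesis by simp
qed

text \<open>Since \<open>cos t \<le> \<pi>/2 - t\<close>, the integrand \<open>1 / sqrt (a + p cos\<^sup>2 t)\<close> dominates
  \<open>1 / (sqrt a + sqrt H (\<pi>/2 - t))\<close>.\<close>
lemma ln_le_ellJ:
  fixes a p H :: real
  assumes a: "0 < a" and p: "0 \<le> p" "p \<le> H"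
  shows "ln (1 + sqrt H * (pi/2) / sqrt a) / sqrt H \<le> ellJ (p + a) (- p)"
proof (cases "H = 0")
  case True
  then show ?thesis using a p by (simp add: ellJ_zero)
next
  case False
  then have H: "0 < sqrt H" using p by simp
  have "ln (1 + sqrt H * (pi/2) / sqrt a) / sqrt H
        = integral {0..pi/2} (\<lambda>t. 1 / (sqrt a + sqrt H * (pi/2 - t)))"
    using has_integral_inverse_affine[of "sqrt a" "sqrt H" "pi/2"] a H by (simp add: integral_unique)
  also have "\<dots> \<le> ellJ (p + a) (- p)"
    unfolding ellJ_def
  proof (rule integral_le)
    fix t :: real assume t: "t \<in> {0..pi/2}"
    have pos: "0 < sqrt a + sqrt H * (pi/2 - t)"
      using a H t by (intro add_pos_nonneg) auto
    have "cos t \<le> pi/2 - t"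
      using sin_x_le_x[of "pi/2 - t"] t by (simp add: sin_diff)
    moreover have "0 \<le> cos t" using t by (intro cos_ge_zero) auto
    ultimately have "H * (cos t)\<^sup>2 \<le> H * (pi/2 - t)\<^sup>2"
      using p by (intro mult_left_mono power_mono) auto
    then have "p + a + - p * (sin t)\<^sup>2 \<le> a + H * (pi/2 - t)\<^sup>2"
      using p mult_right_mono[OF p(2) zero_le_power2[of "cos t"]] by (simp add: cos_squared_eq algebra_simps)
    also have "\<dots> \<le> (sqrt a + sqrt H * (pi/2 - t))\<^sup>2"
      using a p t H by (simp add: power2_eq_square algebra_simps)
    finally have "sqrt (p + a + - p * (sin t)\<^sup>2) \<le> sqrt a + sqrt H * (pi/2 - t)"
      using pos by (intro real_le_lsqrt) auto
    then show "1 / (sqrt a + sqrt H * (pi/2 - t)) \<le> 1 / sqrt (p + a + - p * (sin t)\<^sup>2)"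
      using pos ellJ_integrand_pos[of "p + a" "- p" t] a p by (intro divide_left_mono mult_pos_pos) auto
  qed (use a p H has_integral_inverse_affine[of "sqrt a" "sqrt H" "pi/2"]
          ellJ_integrable[of "p + a" "- p"] in auto)
  finally show ?thesis .
qed

definition quartic_period :: "real \<Rightarrow> real \<Rightarrow> real" where
  "quartic_period h \<rho> = 4 * ellJ (\<rho> - h) (\<rho> + h)"

lemma Txi_eq_quartic_period:
  assumes h: "h < 0" and c: "-1 < c" "c < c0 h"
  shows "Txi h c = quartic_period h (sqrt (h\<^sup>2 - 2 * (c + 1)))"
proof -
  define \<rho> where "\<rho> = sqrt (h\<^sup>2 - 2 * (c + 1))"
  have "0 < h\<^sup>2 - 2 * (c + 1)" using c by (simp add: c0_def)
  then have \<rho>: "0 < \<rho>" "\<rho>\<^sup>2 = h\<^sup>2 - 2 * (c + 1)" by (simp_all add: \<rho>_def)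
  have "\<rho> < - h"
    using power_less_imp_less_base[of \<rho> 2 "- h"] \<rho> h c by simp
  have quartic: "x ^ 4 + 2 * h * x\<^sup>2 + 2 * (c + 1) = (- h - \<rho> - x\<^sup>2) * ((\<rho> - h) + (- 1) * x\<^sup>2)" for x
    using \<rho>(2) by (simp add: algebra_simps power2_eq_square power4_eq_xxxx)
  have "integral {0..sqrt (- h - \<rho>)} (\<lambda>x. 1 / sqrt ((- h - \<rho> - x\<^sup>2) * ((\<rho> - h) + (- 1) * x\<^sup>2)))
        = ellJ (\<rho> - h) ((- 1) * (- h - \<rho>))"
    using \<open>\<rho> < - h\<close> \<rho> by (intro integral_sqrt_product_eq_ellJ) auto
  then show ?thesis
    unfolding Txi_def xi1_def quartic_period_def \<rho>_def[symmetric] quartic by simp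
qed

lemma Teta_eq_quartic_period:
  assumes h: "h < 0" and c: "c < 1"
  shows "Teta h c = quartic_period h (sqrt (h\<^sup>2 - 2 * (c - 1)))"
proof -
  define \<rho> where "\<rho> = sqrt (h\<^sup>2 - 2 * (c - 1))"
  have "0 < h\<^sup>2 - 2 * (c - 1)" using c by (smt (verit) zero_le_power2)
  then have \<rho>: "0 < \<rho>" "\<rho>\<^sup>2 = h\<^sup>2 - 2 * (c - 1)" by (simp_all add: \<rho>_def)
  have "- h < \<rho>"
    using power_less_imp_less_base[of "- h" 2 \<rho>] \<rho> c by simp
  have quartic: "- (y ^ 4) + 2 * h * y\<^sup>2 - 2 * (c - 1) = (h + \<rho> - y\<^sup>2) * ((\<rho> - h) + 1 * y\<^sup>2)" for y
    using \<rho>(2) by (simp add: algebra_simps power2_eq_square power4_eq_xxxx)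
  have "integral {0..sqrt (h + \<rho>)} (\<lambda>y. 1 / sqrt ((h + \<rho> - y\<^sup>2) * ((\<rho> - h) + 1 * y\<^sup>2)))
        = ellJ (\<rho> - h) (1 * (h + \<rho>))"
    using \<open>- h < \<rho>\<close> \<rho> h by (intro integral_sqrt_product_eq_ellJ) auto
  then show ?thesis
    unfolding Teta_def eta1_def quartic_period_def \<rho>_def[symmetric] quartic by (simp add: add.commute)
qed

lemma quartic_period_pos:
  assumes "h < 0" "0 < \<rho>"
  shows "0 < quartic_period h \<rho>"
  using assms ellJ_pos[of "\<rho> - h" "\<rho> + h"] by (simp add: quartic_period_def)

lemma tendsto_quartic_period:
  assumes "h < 0" "(f \<longlongrightarrow> \<rho>) F" "0 < \<rho>"
  shows "((\<lambda>x. quartic_period h (f x)) \<longlongrightarrow> quartic_period h \<rho>) F"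
  unfolding quartic_period_def using assms by (intro tendsto_intros tendsto_ellJ) auto

lemma quartic_period_eq_ellK:
  assumes "h < 0" "0 < \<rho>"
  shows "quartic_period h \<rho> = 4 * ellK (- (\<rho> + h) / (\<rho> - h)) / sqrt (\<rho> - h)"
  using assms ellJ_eq_ellK[of "\<rho> - h" "\<rho> + h"] by (simp add: quartic_period_def)

lemma quartic_period_eq_ellK_reflected:
  assumes "h < 0" "0 < \<rho>"
  shows "quartic_period h \<rho> = 4 * ellK ((\<rho> + h) / (2 * \<rho>)) / sqrt (2 * \<rho>)"
  using assms ellJ_reflect[of "\<rho> - h" "\<rho> + h"] ellJ_eq_ellK[of "2 * \<rho>" "- (\<rho> + h)"]
  by (simp add: quartic_period_def add.commute)

lemma quartic_period_less:
  assumes h: "h < 0" and \<rho>: "- h < \<rho>"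
  shows "quartic_period h \<rho> < quartic_period h (- h)"
proof -
  have "quartic_period h \<rho> \<le> 4 * ellJ (\<rho> - h) 0"
    using ellJ_le_ellJ_zero[of "\<rho> - h" "\<rho> + h"] assms by (simp add: quartic_period_def)
  also have "\<dots> < 4 * ellJ (- h - h) 0"
    using assms by (simp add: ellJ_zero divide_strict_left_mono)
  finally show ?thesis by (simp add: quartic_period_def)
qed

lemma quartic_period_at_top:
  assumes h: "h < 0"
  shows "filterlim (quartic_period h) at_top (at_right 0)"
proof (rule filterlim_at_top_mono)
  have "\<forall>\<^sub>F \<rho> in at_right 0. \<rho> \<in> {0<..<- h}"
    using h by (intro eventually_at_right_real) simp
  then show "\<forall>\<^sub>F \<rho> in at_right 0. 4 * (ln (1 + sqrt (- h) * (pi/2) / sqrt (2 * \<rho>)) / sqrt (- h))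
               \<le> quartic_period h \<rho>"
  proof eventually_elim
    case (elim \<rho>)
    then have "ln (1 + sqrt (- h) * (pi/2) / sqrt (2 * \<rho>)) / sqrt (- h)
               \<le> ellJ ((- h - \<rho>) + 2 * \<rho>) (- (- h - \<rho>))"
      by (intro ln_le_ellJ) auto
    then show ?case by (simp add: quartic_period_def)
  qed
  have "0 < sqrt (- h) * (pi/2)" "0 < 4 / sqrt (- h)" using h by simp_all
  then show "filterlim (\<lambda>\<rho>. 4 * (ln (1 + sqrt (- h) * (pi/2) / sqrt (2 * \<rho>)) / sqrt (- h)))
               at_top (at_right 0)"
    by real_asymp
qed

lemma Txi_Teta_ratio_tendsto:
  assumes h: "h < 0" and F: "((\<lambda>c. c) \<longlongrightarrow> c') F" "\<forall>\<^sub>F c in F. -1 < c \<and> c < c0 h"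
    and c': "0 < h\<^sup>2 - 2 * (c' + 1)" "c' \<le> 1"
  shows "((\<lambda>c. Txi h c / Teta h c) \<longlongrightarrow>
           quartic_period h (sqrt (h\<^sup>2 - 2 * (c' + 1))) / quartic_period h (sqrt (h\<^sup>2 - 2 * (c' - 1)))) F"
proof (rule Lim_transform_eventually)
  have "0 < h\<^sup>2 - 2 * (c' - 1)" using c' h by (simp add: add_pos_nonneg)
  then have "0 < quartic_period h (sqrt (h\<^sup>2 - 2 * (c' - 1)))"
    using h by (intro quartic_period_pos) auto
  then show "((\<lambda>c. quartic_period h (sqrt (h\<^sup>2 - 2 * (c + 1))) / quartic_period h (sqrt (h\<^sup>2 - 2 * (c - 1))))
          \<longlongrightarrow> quartic_period h (sqrt (h\<^sup>2 - 2 * (c' + 1))) / quartic_period h (sqrt (h\<^sup>2 - 2 * (c' - 1)))) F"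
    using h c'
    by (intro tendsto_divide tendsto_quartic_period tendsto_intros F(1)) auto
  show "\<forall>\<^sub>F c in F. quartic_period h (sqrt (h\<^sup>2 - 2 * (c + 1))) / quartic_period h (sqrt (h\<^sup>2 - 2 * (c - 1)))
          = Txi h c / Teta h c"
    using F(2) by eventually_elim
      (use h c0_def in \<open>simp add: Txi_eq_quartic_period Teta_eq_quartic_period\<close>)
qed

lemma Txi_Teta_ratio_at_minus_one:
  assumes h: "h < 0"
  shows "((\<lambda>c. Txi h c / Teta h c) \<longlongrightarrow>
           quartic_period h (- h) / quartic_period h (sqrt (h\<^sup>2 + 4))) (at_right (-1))"
proof -
  have "\<forall>\<^sub>F c in at_right (-1). c \<in> {-1<..<c0 h}"
    using h by (intro eventually_at_right_real) (simp add: c0_def)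
  then have "\<forall>\<^sub>F c in at_right (-1). -1 < c \<and> c < c0 h"
    by simp
  from Txi_Teta_ratio_tendsto[OF h tendsto_ident_at this] h
  show ?thesis by simp
qed

lemma Txi_Teta_ratio_at_c0:
  assumes h: "h < -2"
  shows "((\<lambda>c. Txi h c / Teta h c) \<longlongrightarrow>
           quartic_period h (sqrt (h\<^sup>2 - 4)) / quartic_period h (- h)) (at_left (c0 h))"
proof -
  have "4 < h\<^sup>2"
    using h power_strict_mono[of 2 "- h" 2] by simp
  then have c0: "c0 h = 1" by (simp add: c0_def)
  have "\<forall>\<^sub>F c in at_left 1. c \<in> {-1<..<1::real}"
    by (intro eventually_at_left_real) simp
  then have "\<forall>\<^sub>F c in at_left (c0 h). -1 < c \<and> c < c0 h"
    by (simp add: c0)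
  from Txi_Teta_ratio_tendsto[OF _ tendsto_ident_at this] h \<open>4 < h\<^sup>2\<close>
  show ?thesis by (simp add: c0)
qed

lemma Txi_Teta_ratio_at_top:
  assumes h: "h < 0" "-2 \<le> h"
  shows "filterlim (\<lambda>c. Txi h c / Teta h c) at_top (at_left (c0 h))"
proof -
  have "h\<^sup>2 \<le> 4"
    using h power_mono[of "- h" 2 2] by simp
  then have c0: "c0 h = -1 + h\<^sup>2 / 2" by (simp add: c0_def)
  have ev: "\<forall>\<^sub>F c in at_left (c0 h). c \<in> {-1<..<c0 h}"
    using h by (intro eventually_at_left_real) (simp add: c0)
  have root: "filterlim (\<lambda>c. sqrt (h\<^sup>2 - 2 * (c + 1))) (at_right 0) (at_left (c0 h))"
  proof (rule tendsto_imp_filterlim_at_right)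
    have "((\<lambda>c. sqrt (h\<^sup>2 - 2 * (c + 1))) \<longlongrightarrow> sqrt (h\<^sup>2 - 2 * (c0 h + 1))) (at_left (c0 h))"
      by (intro tendsto_intros)
    then show "((\<lambda>c. sqrt (h\<^sup>2 - 2 * (c + 1))) \<longlongrightarrow> 0) (at_left (c0 h))"
      by (simp add: c0)
    show "\<forall>\<^sub>F c in at_left (c0 h). 0 < sqrt (h\<^sup>2 - 2 * (c + 1))"
      using ev by eventually_elim (simp add: c0)
  qed
  have "\<forall>\<^sub>F c in at_left (c0 h). quartic_period h (sqrt (h\<^sup>2 - 2 * (c + 1))) = Txi h c"
    using ev by eventually_elim (use h in \<open>simp add: Txi_eq_quartic_period\<close>)
  from filterlim_cong[OF refl refl this] filterlim_compose[OF quartic_period_at_top[OF h(1)] root]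
  have Txi: "filterlim (Txi h) at_top (at_left (c0 h))"
    by simp
  have "((\<lambda>c. quartic_period h (sqrt (h\<^sup>2 - 2 * (c - 1)))) \<longlongrightarrow> quartic_period h 2) (at_left (c0 h))"
  proof (rule tendsto_quartic_period[OF h(1)])
    have "((\<lambda>c. sqrt (h\<^sup>2 - 2 * (c - 1))) \<longlongrightarrow> sqrt (h\<^sup>2 - 2 * (c0 h - 1))) (at_left (c0 h))"
      by (intro tendsto_intros)
    then show "((\<lambda>c. sqrt (h\<^sup>2 - 2 * (c - 1))) \<longlongrightarrow> 2) (at_left (c0 h))"
      by (simp add: c0)
  qed simp
  then have "(Teta h \<longlongrightarrow> quartic_period h 2) (at_left (c0 h))"
    by (rule Lim_transform_eventually)
      (use ev h in \<open>auto elim!: eventually_mono simp: Teta_eq_quartic_period c0_def\<close>)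
  then have "((\<lambda>c. inverse (Teta h c)) \<longlongrightarrow> inverse (quartic_period h 2)) (at_left (c0 h))"
    using quartic_period_pos[OF h(1), of 2] by (intro tendsto_inverse) auto
  from filterlim_tendsto_pos_mult_at_top[OF this _ Txi] quartic_period_pos[OF h(1), of 2]
  show ?thesis by (simp add: divide_inverse mult.commute)
qed

lemma quartic_period_ratio_minus_one_eq:
  assumes h: "h < 0"
  shows "quartic_period h (- h) / quartic_period h (sqrt (h\<^sup>2 + 4))
         = (1 + 4 / h\<^sup>2) powr (1/4) * ellK 0 / ellK ((h + sqrt (h\<^sup>2 + 4)) / (2 * sqrt (h\<^sup>2 + 4)))"
proof -
  define s where "s = sqrt (h\<^sup>2 + 4)"
  define k where "k = (h + s) / (2 * s)"
  have "0 < h\<^sup>2 + 4" by (simp add: add_nonneg_pos)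
  then have s: "0 < s" "s\<^sup>2 = h\<^sup>2 + 4" by (simp_all add: s_def)
  have T0: "quartic_period h (- h) = 4 * ellK 0 / sqrt (- 2 * h)"
    using quartic_period_eq_ellK[of h "- h"] h by simp
  have Ts: "quartic_period h s = 4 * ellK k / sqrt (2 * s)"
    using quartic_period_eq_ellK_reflected[of h s] h s by (simp add: k_def add.commute)
  have "0 < ellK k"
    using quartic_period_pos[of h s] h s Ts by (simp add: zero_less_divide_iff)
  define x where "x = (2 * s) / (- 2 * h)"
  have "0 \<le> x" using h s by (simp add: x_def divide_nonneg_neg)
  have x2: "1 + 4 / h\<^sup>2 = x powr 2"
    using h s by (simp add: x_def power_divide field_simps)
  have "(1 + 4 / h\<^sup>2) powr (1/4) = sqrt x"
    unfolding x2 powr_powr using \<open>0 \<le> x\<close> by (simp add: powr_half_sqrt)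
  then have W: "(1 + 4 / h\<^sup>2) powr (1/4) = sqrt (2 * s) / sqrt (- 2 * h)"
    by (simp only: x_def real_sqrt_divide)
  have "quartic_period h (- h) / quartic_period h s = sqrt (2 * s) / sqrt (- 2 * h) * ellK 0 / ellK k"
    unfolding T0 Ts using h s \<open>0 < ellK k\<close> by (simp add: field_simps)
  then show ?thesis
    unfolding W by (simp add: s_def k_def)
qed

lemma quartic_period_ratio_c0_eq:
  assumes h: "h < -2"
  shows "quartic_period h (sqrt (h\<^sup>2 - 4)) / quartic_period h (- h)
         = (2 * h / (h - sqrt (h\<^sup>2 - 4))) powr (1/2) * ellK (4 / (- h + sqrt (h\<^sup>2 - 4))\<^sup>2) / ellK 0"
proof -
  define r where "r = sqrt (h\<^sup>2 - 4)"
  define m where "m = 4 / (- h + r)\<^sup>2"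
  have "4 < h\<^sup>2"
    using h power_strict_mono[of 2 "- h" 2] by simp
  then have r: "0 < r" "r\<^sup>2 = h\<^sup>2 - 4" by (simp_all add: r_def)
  have "r < - h"
    using power_less_imp_less_base[of r 2 "- h"] r h by simp
  have "- (r + h) * (r - h) = h\<^sup>2 - r\<^sup>2"
    by (simp add: power2_eq_square algebra_simps)
  also have "\<dots> = 4"
    using r(2) by simp
  finally have four: "- (r + h) * (r - h) = 4" .
  have "m = - (r + h) * (r - h) / (r - h)\<^sup>2"
    unfolding m_def four by simp
  also have "\<dots> = - (r + h) / (r - h)"
    using \<open>r < - h\<close> by (simp add: power2_eq_square)
  finally have m: "m = - (r + h) / (r - h)" .
  have T0: "quartic_period h (- h) = 4 * ellK 0 / sqrt (- 2 * h)"
    using quartic_period_eq_ellK[of h "- h"] h by simp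
  have Tr: "quartic_period h r = 4 * ellK m / sqrt (r - h)"
    using quartic_period_eq_ellK[of h r, folded m] h r by simp
  have "0 < ellK 0"
    using quartic_period_pos[of h "- h"] h T0 by (simp add: zero_less_divide_iff)
  have ratio: "2 * h / (h - r) = (- 2 * h) / (r - h)"
    by (metis minus_diff_eq minus_divide_divide mult_minus_left)
  have "0 \<le> (- 2 * h) / (r - h)"
    using h r \<open>r < - h\<close> by (intro divide_nonneg_pos) auto
  then have W: "(2 * h / (h - r)) powr (1/2) = sqrt (- 2 * h) / sqrt (r - h)"
    unfolding ratio by (simp only: powr_half_sqrt real_sqrt_divide)
  have rearrange: "(4 * a / b) / (4 * c / d) = d / b * a / c" if "b \<noteq> 0" "c \<noteq> 0" "d \<noteq> 0" for a b c d :: real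
    using that by (simp add: field_simps)
  have "quartic_period h r / quartic_period h (- h) = sqrt (- 2 * h) / sqrt (r - h) * ellK m / ellK 0"
    unfolding T0 Tr using h r \<open>r < - h\<close> \<open>0 < ellK 0\<close> by (intro rearrange) auto
  then show ?thesis
    unfolding r_def[symmetric] m_def[symmetric] W .
qed

theorem proposition4p2:
  fixes h :: real
  assumes "h < 0"
  shows "((\<lambda>c. Txi h c / Teta h c) \<longlongrightarrow>
            (1 + 4 / h\<^sup>2) powr (1/4) * ellK 0
              / ellK ((h + sqrt (h\<^sup>2 + 4)) / (2 * sqrt (h\<^sup>2 + 4)))) (at_right (-1))
       \<and> (1 + 4 / h\<^sup>2) powr (1/4) * ellK 0
              / ellK ((h + sqrt (h\<^sup>2 + 4)) / (2 * sqrt (h\<^sup>2 + 4))) > 1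
       \<and> (-2 \<le> h \<longrightarrow> filterlim (\<lambda>c. Txi h c / Teta h c) at_top (at_left (c0 h)))
       \<and> (h < -2 \<longrightarrow> ((\<lambda>c. Txi h c / Teta h c) \<longlongrightarrow>
            (2 * h / (h - sqrt (h\<^sup>2 - 4))) powr (1/2)
              * ellK (4 / (- h + sqrt (h\<^sup>2 - 4))\<^sup>2) / ellK 0) (at_left (c0 h)))"
proof -
  have "- h < sqrt (h\<^sup>2 + 4)"
    using real_sqrt_less_mono[of "h\<^sup>2" "h\<^sup>2 + 4"] assms by simp
  moreover have "0 < sqrt (h\<^sup>2 + 4)"
    by (simp add: add_nonneg_pos)
  ultimately have "1 < quartic_period h (- h) / quartic_period h (sqrt (h\<^sup>2 + 4))"
    using assms quartic_period_less quartic_period_pos by simp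
  then show ?thesis
    using assms Txi_Teta_ratio_at_minus_one quartic_period_ratio_minus_one_eq
      Txi_Teta_ratio_at_top Txi_Teta_ratio_at_c0 quartic_period_ratio_c0_eq
    by auto
qed

end
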